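(* There is a constant $C>0$ such that for all $\boldsymbol{m}=(m_1,m_2)\in\mathbb{N}^2$ the Lebesgue constant of interpolation in $\Pi_\square$ on the rhodonea nodes satisfies \[\Lambda^{(\boldsymbol{m})}_\square:=\sup_{\mathscr{f}\in C(\mathbb{D}),\ \|\mathscr{f}\|_\infty\le1}\ \sup_{(r,\theta)\in[0,1]\times[-\pi,\pi]}|P_f(r,\theta)|\ \le\ C\ln(m_1+1)\ln(m_2+1),\] where $P_f$ denotes the unique function in $\Pi_\square$ with $P_f(r_{i_1},\theta_{i_2})=\mathscr{f}(r_{i_1},\theta_{i_2})$ for all $\boldsymbol{i}\in\mathrm{I}^{(\boldsymbol{m})}$.
   Context: Polar coordinates $(r,\theta)\in[0,1]\times[-\pi,\pi]$ on the unit disk; $C(\mathbb{D})$ is the set of continuous $\mathscr{f}$ on $[0,1]\times[-\pi,\pi]$ with $\mathscr{f}(r,-\pi)=\mathscr{f}(r,\pi)$ and $\mathscr{f}(0,\theta)$ independent of $\theta$; $\|\mathscr{f}\|_\infty=\sup_{(r,\theta)}|\mathscr{f}(r,\theta)|$. $\mathrm{I}^{(\boldsymbol{m})}=\{(i_1,i_2)\in\mathbb{Z}^2:\ 0\le i_1\le m_1,\ -2m_2<i_2\le 2m_2,\ i_2\le0\text{ if }i_1=m_1,\ i_1+i_2\text{ even}\}$, $r_{i_1}=\cos\!\big(\frac{i_1\pi}{2m_1}\big)$, $\theta_{i_2}=\frac{i_2\pi}{2m_2}$. $\Pi_\square=\mathrm{span}\{X_{\boldsymbol{\gamma}}:\boldsymbol{\gamma}\in\Gamma_\square\}$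 with $X_{\boldsymbol{\gamma}}(r,\theta)=T_{\gamma_1}(r)e^{\mathrm{i}\gamma_2\theta}$, $T_n(r)=\cos(n\arccos r)$, and $\Gamma_\square=\{\boldsymbol{\gamma}\in\mathbb{Z}^2: 0\le\gamma_1\le2m_1,\ -m_2<\gamma_2\le m_2,\ \gamma_1+\gamma_2\text{ even}\}$; the interpolation problem in $\Pi_\square$ on these nodes is uniquely solvable. *)

theory Defs
  imports "HOL-Analysis.Analysis"
begin

definition cheb :: "nat \<Rightarrow> real \<Rightarrow> real" where
  "cheb n r = cos (real n * arccos r)"

definition node_idx :: "nat \<Rightarrow> nat \<Rightarrow> (nat \<times> int) set" where
  "node_idx m1 m2 = {(i1, i2). i1 \<le> m1 \<and> - 2 * int m2 < i2 \<and> i2 \<le> 2 * int m2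
      \<and> (i1 = m1 \<longrightarrow> i2 \<le> 0) \<and> even (int i1 + i2)}"

definition node_r :: "nat \<Rightarrow> nat \<Rightarrow> real" where
  "node_r m1 i1 = cos (real i1 * pi / (2 * real m1))"

definition node_theta :: "nat \<Rightarrow> int \<Rightarrow> real" where
  "node_theta m2 i2 = real_of_int i2 * pi / (2 * real m2)"

definition Gamma_sq :: "nat \<Rightarrow> nat \<Rightarrow> (nat \<times> int) set" where
  "Gamma_sq m1 m2 = {(g1, g2). g1 \<le> 2 * m1 \<and> - int m2 < g2 \<and> g2 \<le> int m2
      \<and> even (int g1 + g2)}"

definition Xfun :: "nat \<times> int \<Rightarrow> real \<Rightarrow> real \<Rightarrow> complex" where
  "Xfun g r \<theta> = complex_of_real (cheb (fst g) r) * exp (\<i> * of_int (snd g) * complex_of_real \<theta>)"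

definition Pi_sq :: "nat \<Rightarrow> nat \<Rightarrow> (real \<Rightarrow> real \<Rightarrow> complex) set" where
  "Pi_sq m1 m2 = {p. \<exists>c :: nat \<times> int \<Rightarrow> complex.
      p = (\<lambda>r \<theta>. \<Sum>g\<in>Gamma_sq m1 m2. c g * Xfun g r \<theta>)}"

definition polar_dom :: "(real \<times> real) set" where
  "polar_dom = {0..1} \<times> {-pi..pi}"

text \<open>C(D): continuous functions in polar coordinates, 2pi-periodic in theta and
  independent of theta at r = 0.\<close>
definition C_disk :: "(real \<Rightarrow> real \<Rightarrow> complex) set" where
  "C_disk = {f. continuous_on polar_dom (\<lambda>(r, \<theta>). f r \<theta>)
      \<and> (\<forall>r\<in>{0..1}. f r (-pi) = f r pi)
      \<and> (\<forall>\<theta>\<in>{-pi..pi}. \<forall>\<theta>'\<in>{-pi..pi}. f 0 \<theta> = f 0 \<theta>')}"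

definition sup_norm_le :: "(real \<Rightarrow> real \<Rightarrow> complex) \<Rightarrow> real \<Rightarrow> bool" where
  "sup_norm_le f b \<longleftrightarrow> (\<forall>(r, \<theta>)\<in>polar_dom. cmod (f r \<theta>) \<le> b)"

end

theory Submission
  imports Defs
begin

text \<open>Substituting \<open>r = cos \<phi>\<close> turns \<open>\<Pi>\<^sub>\<box>\<close> into trigonometric polynomials
  \<open>\<Sum> c\<^sub>\<gamma> cos (\<gamma>\<^sub>1 \<phi>) exp (i \<gamma>\<^sub>2 \<theta>)\<close>. Each of them is reproduced exactly by a
  discrete convolution with a product of Dirichlet kernels over the grid
  \<open>(a \<pi>/(2m\<^sub>1), b \<pi>/(2m\<^sub>2))\<close>, \<open>a < 4m\<^sub>1\<close>, \<open>b < 4m\<^sub>2\<close>, \<open>a + b\<close> even. The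
  symmetries of the basis (evenness and \<open>2\<pi>\<close>-periodicity in \<open>\<phi>\<close>, periodicity in \<open>\<theta>\<close>,
  invariance under \<open>(\<phi>, \<theta>) \<mapsto> (\<phi> - \<pi>, \<theta> - \<pi>)\<close>) map every such grid point to
  a rhodonea node, where the interpolant equals \<open>f\<close>. The Lebesgue constant is thus at
  most the product of two discrete \<open>L\<^sup>1\<close> norms of Dirichlet kernels, and each of these
  is \<open>O(n log n)\<close> by the bound \<open>|D(z)| \<le> 1/|sin (z/2)|\<close> and a harmonic sum.\<close>

section \<open>The basis, its symmetries and the rhodonea nodes\<close>

definition grid_step :: "nat \<Rightarrow> real" where
  "grid_step m = pi / (2 * real m)"

definition cos_cis :: "nat \<times> int \<Rightarrow> real \<Rightarrow> real \<Rightarrow> complex" where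
  "cos_cis g \<phi> \<theta> = complex_of_real (cos (real (fst g) * \<phi>)) * cis (of_int (snd g) * \<theta>)"

lemma Xfun_eq_cos_cis: "Xfun g r \<theta> = cos_cis g (arccos r) \<theta>"
  by (simp add: Xfun_def cheb_def cos_cis_def cis_conv_exp mult.assoc)

definition cos_cis_poly :: "(nat \<times> int \<Rightarrow> complex) \<Rightarrow> nat \<Rightarrow> nat \<Rightarrow> real \<Rightarrow> real \<Rightarrow> complex" where
  "cos_cis_poly c m1 m2 \<phi> \<theta> = (\<Sum>g\<in>Gamma_sq m1 m2. c g * cos_cis g \<phi> \<theta>)"

lemma Gamma_sq_even: "g \<in> Gamma_sq m1 m2 \<Longrightarrow> even (int (fst g) + snd g)"
  by (cases g) (simp add: Gamma_sq_def)

lemma Pi_sq_cos_cis_poly: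
  assumes "p \<in> Pi_sq m1 m2"
  obtains c where "\<And>r \<theta>. p r \<theta> = cos_cis_poly c m1 m2 (arccos r) \<theta>"
  using assms by (auto simp: Pi_sq_def cos_cis_poly_def Xfun_eq_cos_cis)

lemma cos_cis_neg: "cos_cis g (- \<phi>) \<theta> = cos_cis g \<phi> \<theta>"
  by (simp add: cos_cis_def)

lemma cos_cis_periodic_fst: "cos_cis g (\<phi> + 2 * pi * of_int k) \<theta> = cos_cis g \<phi> \<theta>"
proof -
  have "real (fst g) * (\<phi> + 2 * pi * of_int k) = real (fst g) * \<phi> + 2 * pi * of_int (int (fst g) * k)"
    by (simp add: algebra_simps)
  then have "cos (real (fst g) * (\<phi> + 2 * pi * of_int k)) = cos (real (fst g) * \<phi>)"
    using sin_cos_eq_iff by blast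
  then show ?thesis by (simp add: cos_cis_def)
qed

lemma cos_cis_periodic_snd: "cos_cis g \<phi> (\<theta> + 2 * pi * of_int k) = cos_cis g \<phi> \<theta>"
proof -
  have "cis (of_int (snd g) * (\<theta> + 2 * pi * of_int k)) = cis (of_int (snd g) * \<theta>) * cis (2 * pi * of_int (snd g * k))"
    by (simp add: cis_mult algebra_simps)
  then show ?thesis by (simp add: cos_cis_def)
qed

lemma cos_cis_shift_pi:
  assumes "even (int (fst g) + snd g)"
  shows "cos_cis g (\<phi> - pi) (\<theta> - pi) = cos_cis g \<phi> \<theta>"
proof -
  obtain k where k: "int (fst g) + snd g = 2 * k" using assms by (rule evenE)
  have "of_int (snd g) * (\<theta> - pi) = of_int (snd g) * \<theta> + real (fst g) * pi + 2 * pi * of_int (- k)"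
  proof -
    have "real_of_int (snd g) = 2 * of_int k - real (fst g)"
      using arg_cong[OF k, of real_of_int] by simp
    then show ?thesis by (simp only:) (simp add: algebra_simps)
  qed
  then have "cis (of_int (snd g) * (\<theta> - pi))
      = cis (of_int (snd g) * \<theta>) * cis (real (fst g) * pi) * cis (2 * pi * of_int (- k))"
    by (simp only: cis_mult)
  also have "\<dots> = cis (of_int (snd g) * \<theta>) * (-1) ^ fst g"
    by (simp only: Complex.DeMoivre[symmetric] cis_pi cis_multiple_2pi Ints_of_int mult_1_right)
  finally have "cis (of_int (snd g) * (\<theta> - pi)) = cis (of_int (snd g) * \<theta>) * (-1) ^ fst g" .
  moreover have "cos (real (fst g) * (\<phi> - pi)) = (-1) ^ fst g * cos (real (fst g) * \<phi>)"
    by (simp add: right_diff_distrib cos_diff)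
  ultimately show ?thesis
    by (simp add: cos_cis_def mult_ac flip: power_add)
qed

lemma reduce_first_index:
  fixes G :: "int \<Rightarrow> int \<Rightarrow> 'a" and M N :: int
  assumes M: "M > 0"
    and neg: "\<And>a b. G (- a) b = G a b"
    and per: "\<And>a b k. G (a + 4 * M * k) b = G a b"
    and shift: "\<And>a b. G (a - 2 * M) (b - 2 * N) = G a b"
  obtains a' b' where "0 \<le> a'" "a' \<le> M" "even (a' + b') = even (a + b)" "G a b = G a' b'"
proof -
  define a1 where "a1 = a mod (4 * M)"
  have a1: "0 \<le> a1" "a1 < 4 * M" using M by (simp_all add: a1_def)
  define k1 where "k1 = a div (4 * M)"
  have a_eq: "a = a1 + 4 * M * k1" by (simp add: a1_def k1_def)
  have G1: "G a b = G a1 b" using per by (simp add: a_eq)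
  have e1: "even (a1 + b) = even (a + b)" by (simp add: a_eq even_add)
  define a2 where "a2 = (if a1 \<le> 2 * M then a1 else 4 * M - a1)"
  have a2: "0 \<le> a2" "a2 \<le> 2 * M" using a1 by (auto simp: a2_def)
  have G2: "G a1 b = G a2 b"
    using per[where a = "- a1" and k = 1] neg[of a1] by (simp add: a2_def)
  have e2: "even (a2 + b) = even (a1 + b)" by (simp add: a2_def even_add)
  show ?thesis
  proof (cases "a2 \<le> M")
    case True
    then show ?thesis using that[of a2 b] a2 G1 G2 e1 e2 by simp
  next
    case False
    have "G a2 b = G (2 * M - a2) (b - 2 * N)"
      using shift[of a2 b] neg[of "a2 - 2 * M" "b - 2 * N"] by simp
    moreover have "even (2 * M - a2 + (b - 2 * N)) = even (a2 + b)" by (simp add: even_add)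
    ultimately show ?thesis
      using that[of "2 * M - a2" "b - 2 * N"] False a2 G1 G2 e1 e2 by simp
  qed
qed

lemma reduce_second_index:
  fixes G :: "int \<Rightarrow> int \<Rightarrow> 'a" and N :: int
  assumes N: "N > 0" and per: "\<And>a b k. G a (b + 4 * N * k) = G a b"
  obtains b' where "- 2 * N < b'" "b' \<le> 2 * N" "even (a + b') = even (a + b)" "G a b = G a b'"
proof -
  define k where "k = (b + 2 * N - 1) div (4 * N)"
  define r where "r = (b + 2 * N - 1) mod (4 * N)"
  have r: "0 \<le> r" "r < 4 * N" using N by (simp_all add: r_def)
  have b_eq: "b = (r - 2 * N + 1) + 4 * N * k"
    using div_mult_mod_eq[of "b + 2 * N - 1" "4 * N"] by (simp add: k_def r_def algebra_simps)
  show ?thesis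
  proof (rule that[of "r - 2 * N + 1"])
    show "G a b = G a (r - 2 * N + 1)" using per by (simp add: b_eq)
    show "even (a + (r - 2 * N + 1)) = even (a + b)" by (simp add: b_eq even_add)
  qed (use r in auto)
qed

lemma exists_node_idx_representative:
  fixes G :: "int \<Rightarrow> int \<Rightarrow> 'a" and m1 m2 :: nat
  assumes m1: "m1 > 0" and m2: "m2 > 0"
    and neg: "\<And>a b. G (- a) b = G a b"
    and per1: "\<And>a b k. G (a + 4 * int m1 * k) b = G a b"
    and per2: "\<And>a b k. G a (b + 4 * int m2 * k) = G a b"
    and shift: "\<And>a b. G (a - 2 * int m1) (b - 2 * int m2) = G a b"
    and even: "even (a + b)"
  obtains i1 i2 where "(i1, i2) \<in> node_idx m1 m2" and "G a b = G (int i1) i2"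
proof -
  have M1: "int m1 > 0" and M2: "int m2 > 0" using m1 m2 by simp_all
  obtain a' b' where a': "0 \<le> a'" "a' \<le> int m1"
    and e': "even (a' + b') = even (a + b)" and G': "G a b = G a' b'"
    using reduce_first_index[where G = G and M = "int m1" and N = "int m2" and a = a and b = b,
      OF M1 neg per1 shift] by blast
  obtain b'' where b'': "- 2 * int m2 < b''" "b'' \<le> 2 * int m2"
    and e'': "even (a' + b'') = even (a' + b')" and G'': "G a' b' = G a' b''"
    using reduce_second_index[where G = G and N = "int m2" and a = a' and b = b', OF M2 per2] by blast
  have e'': "even (a' + b'')" using e' e'' even by simp
  show ?thesis
  proof (cases "a' = int m1 \<and> 0 < b''")
    case True
    have "G a' b'' = G (int m1) (b'' - 2 * int m2)"
      using shift[of a' b''] neg[of "a' - 2 * int m1" "b'' - 2 * int m2"] True by simp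
    moreover have "(m1, b'' - 2 * int m2) \<in> node_idx m1 m2"
      using True b'' e'' by (auto simp: node_idx_def even_add)
    ultimately show ?thesis using that G' G'' by simp
  next
    case False
    obtain i1 where i1: "a' = int i1" using a'(1) nonneg_int_cases by blast
    have "(i1, b'') \<in> node_idx m1 m2"
      using False a' b'' e'' by (auto simp: node_idx_def i1)
    then show ?thesis using that G' G'' i1 by simp
  qed
qed

lemma cos_cis_poly_neg: "cos_cis_poly c m1 m2 (- \<phi>) \<theta> = cos_cis_poly c m1 m2 \<phi> \<theta>"
  by (simp add: cos_cis_poly_def cos_cis_neg)

lemma cos_cis_poly_periodic_fst:
  "cos_cis_poly c m1 m2 (\<phi> + 2 * pi * of_int k) \<theta> = cos_cis_poly c m1 m2 \<phi> \<theta>"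
  by (simp add: cos_cis_poly_def cos_cis_periodic_fst)

lemma cos_cis_poly_periodic_snd:
  "cos_cis_poly c m1 m2 \<phi> (\<theta> + 2 * pi * of_int k) = cos_cis_poly c m1 m2 \<phi> \<theta>"
  by (simp add: cos_cis_poly_def cos_cis_periodic_snd)

lemma cos_cis_poly_shift_pi:
  "cos_cis_poly c m1 m2 (\<phi> - pi) (\<theta> - pi) = cos_cis_poly c m1 m2 \<phi> \<theta>"
  unfolding cos_cis_poly_def
  by (intro sum.cong refl arg_cong[where f = "(*) _"] cos_cis_shift_pi) (erule Gamma_sq_even)

lemma cos_cis_poly_grid_value_at_node:
  assumes m1: "m1 > 0" and m2: "m2 > 0" and even: "even (a + b)"
  obtains i1 i2 where "(i1, i2) \<in> node_idx m1 m2"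
    and "cos_cis_poly c m1 m2 (of_int a * grid_step m1) (of_int b * grid_step m2)
       = cos_cis_poly c m1 m2 (real i1 * grid_step m1) (of_int i2 * grid_step m2)"
proof -
  define G where "G a b = cos_cis_poly c m1 m2 (of_int a * grid_step m1) (of_int b * grid_step m2)"
    for a b :: int
  have "of_int (a + 4 * int m1 * k) * grid_step m1 = of_int a * grid_step m1 + 2 * pi * of_int k"
    and "of_int (b + 4 * int m2 * k) * grid_step m2 = of_int b * grid_step m2 + 2 * pi * of_int k"
    and "of_int (a - 2 * int m1) * grid_step m1 = of_int a * grid_step m1 - pi"
    and "of_int (b - 2 * int m2) * grid_step m2 = of_int b * grid_step m2 - pi" for a b k
    using m1 m2 by (simp_all add: grid_step_def field_simps)
  then have "G (- a) b = G a b" "G (a + 4 * int m1 * k) b = G a b" "G a (b + 4 * int m2 * k) = G a b"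
    "G (a - 2 * int m1) (b - 2 * int m2) = G a b" for a b k
    by (simp_all only: G_def of_int_minus mult_minus_left cos_cis_poly_neg
        cos_cis_poly_periodic_fst cos_cis_poly_periodic_snd cos_cis_poly_shift_pi)
  then obtain i1 i2 where "(i1, i2) \<in> node_idx m1 m2" and "G a b = G (int i1) i2"
    using exists_node_idx_representative[where G = G, OF m1 m2 _ _ _ _ even] by metis
  then show ?thesis using that by (simp add: G_def)
qed

lemma node_r_eq_cos: "node_r m1 i1 = cos (real i1 * grid_step m1)"
  by (simp add: node_r_def grid_step_def)

lemma node_theta_eq: "node_theta m2 i2 = of_int i2 * grid_step m2"
  by (simp add: node_theta_def grid_step_def)

lemma node_angle_bounds:
  assumes "i1 \<le> m1"
  shows "0 \<le> real i1 * grid_step m1" and "real i1 * grid_step m1 \<le> pi / 2"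
proof -
  show "0 \<le> real i1 * grid_step m1" by (simp add: grid_step_def)
  show "real i1 * grid_step m1 \<le> pi / 2"
  proof (cases "m1 = 0")
    case False
    have "real i1 * grid_step m1 \<le> real m1 * grid_step m1"
      using assms by (intro mult_right_mono) (auto simp: grid_step_def)
    also have "\<dots> = pi / 2" using False by (simp add: grid_step_def)
    finally show ?thesis .
  qed (simp add: grid_step_def)
qed

lemma arccos_node_r:
  assumes "i1 \<le> m1"
  shows "arccos (node_r m1 i1) = real i1 * grid_step m1"
  unfolding node_r_eq_cos using node_angle_bounds[OF assms] by (intro arccos_cos) auto

lemma node_in_polar_dom:
  assumes "(i1, i2) \<in> node_idx m1 m2"
  shows "(node_r m1 i1, node_theta m2 i2) \<in> polar_dom"
proof -
  have i: "i1 \<le> m1" "- 2 * int m2 < i2" "i2 \<le> 2 * int m2" using assms by (auto simp: node_idx_def)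
  then have "real m2 > 0" by simp
  then have "\<bar>of_int i2 / (2 * real m2)\<bar> \<le> 1" using i by (auto simp: field_simps)
  then have "\<bar>of_int i2 / (2 * real m2)\<bar> * pi \<le> pi" by (intro mult_left_le_one_le) auto
  then have "\<bar>node_theta m2 i2\<bar> \<le> pi" by (simp add: node_theta_def abs_mult)
  moreover have "0 \<le> node_r m1 i1"
    unfolding node_r_eq_cos using node_angle_bounds[OF i(1)] by (intro cos_ge_zero) auto
  ultimately show ?thesis by (auto simp: polar_dom_def node_r_def)
qed

lemma interpolant_grid_value_le:
  assumes m1: "m1 > 0" and m2: "m2 > 0" and f: "sup_norm_le f B"
    and pc: "\<And>r \<theta>. p r \<theta> = cos_cis_poly c m1 m2 (arccos r) \<theta>"
    and interp: "\<forall>(i1, i2) \<in> node_idx m1 m2.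
       p (node_r m1 i1) (node_theta m2 i2) = f (node_r m1 i1) (node_theta m2 i2)"
    and even: "even (a + b)"
  shows "norm (cos_cis_poly c m1 m2 (real a * grid_step m1) (real b * grid_step m2)) \<le> B"
proof -
  obtain i1 i2 where node: "(i1, i2) \<in> node_idx m1 m2"
    and eq: "cos_cis_poly c m1 m2 (of_int (int a) * grid_step m1) (of_int (int b) * grid_step m2)
       = cos_cis_poly c m1 m2 (real i1 * grid_step m1) (of_int i2 * grid_step m2)"
    using cos_cis_poly_grid_value_at_node[OF m1 m2] even by (metis even_add even_of_nat)
  have "i1 \<le> m1" using node by (simp add: node_idx_def)
  then have "cos_cis_poly c m1 m2 (real i1 * grid_step m1) (of_int i2 * grid_step m2)
      = p (node_r m1 i1) (node_theta m2 i2)"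
    by (simp add: pc arccos_node_r node_theta_eq)
  also have "\<dots> = f (node_r m1 i1) (node_theta m2 i2)" using interp node by auto
  finally have "cos_cis_poly c m1 m2 (real i1 * grid_step m1) (of_int i2 * grid_step m2)
      = f (node_r m1 i1) (node_theta m2 i2)" .
  moreover have "norm (f (node_r m1 i1) (node_theta m2 i2)) \<le> B"
    using f node_in_polar_dom[OF node] by (auto simp: sup_norm_le_def)
  ultimately show ?thesis using eq by simp
qed

section \<open>Discrete orthogonality and the Dirichlet kernel\<close>

lemma sum_cis_roots_of_unity:
  fixes n :: nat and d :: int
  assumes n: "n > 0" and h: "real n * h = 2 * pi"
  shows "(\<Sum>a<n. cis (of_int d * real a * h)) = (if int n dvd d then of_nat n else 0)"
proof -
  define w where "w = cis (of_int d * h)"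
  have pow: "cis (of_int d * real a * h) = w ^ a" for a
    unfolding w_def Complex.DeMoivre by (simp only: mult_ac)
  show ?thesis
  proof (cases "int n dvd d")
    case True
    then obtain k where "d = int n * k" by blast
    then have "of_int d * h = 2 * pi * of_int k" using h by (simp add: mult_ac)
    then have "w = 1" by (simp add: w_def cis_multiple_2pi)
    then show ?thesis using True by (simp add: pow)
  next
    case False
    have "w \<noteq> 1"
    proof
      assume "w = 1"
      then obtain k :: int where "of_int d * h = of_int (2 * k) * pi"
        unfolding w_def cis_conv_exp exp_eq_1 by auto
      then have "of_int d * (real n * h) = real n * (of_int (2 * k) * pi)"
        by (metis mult.assoc mult.commute)
      then have "(of_int d - real n * of_int k) * (2 * pi) = 0" unfolding h by (simp add: algebra_simps)
      then have "of_int d = real n * of_int k" by simp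
      then have "d = int n * k" by (metis of_int_eq_iff of_int_mult of_int_of_nat_eq)
      then show False using False by simp
    qed
    moreover have "w ^ n = 1"
    proof -
      have "real n * (of_int d * h) = 2 * pi * of_int d" by (metis h mult.assoc mult.commute)
      then show ?thesis by (simp only: w_def Complex.DeMoivre) simp
    qed
    ultimately have "(\<Sum>a<n. w ^ a) = 0" by (simp add: geometric_sum)
    then show ?thesis using False by (simp add: pow)
  qed
qed

text \<open>The frequencies run over \<open>1 - L..L\<close>, matching the half-open range
  \<open>-m\<^sub>2 < \<gamma>\<^sub>2 \<le> m\<^sub>2\<close> of \<open>\<Gamma>\<^sub>\<box>\<close>.\<close>
definition dirichlet_kernel :: "nat \<Rightarrow> real \<Rightarrow> complex" where
  "dirichlet_kernel L z = (\<Sum>k\<in>{1 - int L..int L}. cis (of_int k * z))"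

lemma dirichlet_kernel_sampling:
  fixes n :: nat and j :: int
  assumes n: "n > 0" and h: "real n * h = 2 * pi"
  shows "(\<Sum>a<n. cis (of_int j * real a * h) * dirichlet_kernel L (x - real a * h)) =
     of_nat n * (\<Sum>k\<in>{k \<in> {1 - int L..int L}. int n dvd j - k}. cis (of_int k * x))"
proof -
  have "(\<Sum>a<n. cis (of_int j * real a * h) * dirichlet_kernel L (x - real a * h)) =
     (\<Sum>a<n. \<Sum>k\<in>{1 - int L..int L}. cis (of_int k * x) * cis (of_int (j - k) * real a * h))"
    unfolding dirichlet_kernel_def sum_distrib_left
    by (intro sum.cong refl) (simp add: cis_mult algebra_simps)
  also have "\<dots> = (\<Sum>k\<in>{1 - int L..int L}. cis (of_int k * x) * (\<Sum>a<n. cis (of_int (j - k) * real a * h)))"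
    by (subst sum.swap) (simp add: sum_distrib_left)
  also have "\<dots> = (\<Sum>k\<in>{1 - int L..int L}. if int n dvd j - k then of_nat n * cis (of_int k * x) else 0)"
    by (intro sum.cong refl) (simp only: sum_cis_roots_of_unity[OF n h], simp add: mult.commute)
  also have "\<dots> = of_nat n * (\<Sum>k\<in>{k \<in> {1 - int L..int L}. int n dvd j - k}. cis (of_int k * x))"
    by (simp only: sum_distrib_left sum.inter_filter[OF finite_atLeastAtMost_int])
      (intro sum.cong refl, simp)
  finally show ?thesis .
qed

lemma dirichlet_frequencies_aliased:
  assumes "2 * L \<le> n" and "j0 \<in> {1 - int L..int L}" and "int n dvd j - j0"
  shows "{k \<in> {1 - int L..int L}. int n dvd j - k} = {j0}"
proof -
  have "k = j0" if k: "k \<in> {1 - int L..int L}" and dvd: "int n dvd j - k" for k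
  proof (rule ccontr)
    assume "k \<noteq> j0"
    moreover have "int n dvd j0 - k"
      using dvd_diff[OF dvd assms(3)] by simp
    ultimately have "\<bar>int n\<bar> \<le> \<bar>j0 - k\<bar>" by (intro dvd_imp_le_int) auto
    moreover have "\<bar>j0 - k\<bar> < int n" using assms k by auto
    ultimately show False by simp
  qed
  then show ?thesis using assms(2,3) by blast
qed

lemma dirichlet_frequencies_gap:
  assumes "int L < j" and "j \<le> 3 * int L"
  shows "{k \<in> {1 - int L..int L}. 4 * int L dvd j - k} = {}"
proof -
  have "\<not> 4 * int L dvd j - k" if "k \<in> {1 - int L..int L}" for k
    using assms that by (intro zdvd_not_zless) auto
  then show ?thesis by auto
qed

lemma dirichlet_kernel_reproduces:
  assumes "n > 0" and "real n * h = 2 * pi" and "2 * L \<le> n"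
    and "j0 \<in> {1 - int L..int L}" and "int n dvd j - j0"
  shows "(\<Sum>a<n. cis (of_int j * real a * h) * dirichlet_kernel L (x - real a * h)) =
     of_nat n * cis (of_int j0 * x)"
  by (simp only: dirichlet_kernel_sampling[OF assms(1,2)] dirichlet_frequencies_aliased[OF assms(3-5)])
    simp

lemma dirichlet_kernel_annihilates:
  assumes "L > 0" and "real (4 * L) * h = 2 * pi" and "int L < j" and "j \<le> 3 * int L"
  shows "(\<Sum>a<4 * L. cis (of_int j * real a * h) * dirichlet_kernel L (x - real a * h)) = 0"
proof -
  have "int (4 * L) = 4 * int L" by simp
  then show ?thesis
    using assms by (simp only: dirichlet_kernel_sampling dirichlet_frequencies_gap) simp
qed

lemma dirichlet_kernel_periodic: "dirichlet_kernel L (z + 2 * pi * of_int m) = dirichlet_kernel L z"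
proof -
  have "cis (of_int k * (z + 2 * pi * of_int m)) = cis (of_int k * z) * cis (2 * pi * of_int (k * m))" for k
    by (simp add: cis_mult algebra_simps)
  then have "cis (of_int k * (z + 2 * pi * of_int m)) = cis (of_int k * z)" for k
    by (simp add: cis_multiple_2pi)
  then show ?thesis by (simp add: dirichlet_kernel_def)
qed

lemma norm_dirichlet_kernel_le: "norm (dirichlet_kernel L z) \<le> 2 * real L"
proof -
  have "norm (dirichlet_kernel L z) \<le> (\<Sum>k\<in>{1 - int L..int L}. norm (cis (of_int k * z)))"
    unfolding dirichlet_kernel_def by (rule norm_sum)
  also have "\<dots> = 2 * real L" by simp
  finally show ?thesis .
qed

lemma norm_cis_minus_one: "norm (cis z - 1) = 2 * \<bar>sin (z / 2)\<bar>"
proof -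
  have "cis z - 1 = cis (z / 2) * (2 * \<i> * complex_of_real (sin (z / 2)))"
    using cos_double_sin[of "z / 2"] sin_double[of "z / 2"]
    by (simp add: complex_eq_iff cis.ctr algebra_simps power2_eq_square)
  then show ?thesis by (simp add: norm_mult)
qed

lemma norm_dirichlet_kernel_le_inverse_sin:
  assumes "sin (z / 2) \<noteq> 0"
  shows "norm (dirichlet_kernel L z) \<le> 1 / \<bar>sin (z / 2)\<bar>"
proof -
  define w where "w = cis z"
  have w1: "w \<noteq> 1" using assms norm_cis_minus_one[of z] by (auto simp: w_def)
  have "(\<Sum>i<2 * L. cis ((1 - real L) * z) * w ^ i) = dirichlet_kernel L z"
    unfolding dirichlet_kernel_def
  proof (rule sum.reindex_bij_witness[where i = "\<lambda>k. nat (k - 1 + int L)" and j = "\<lambda>i. 1 - int L + int i"])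
    fix i assume "i \<in> {..<2 * L}"
    show "cis (of_int (1 - int L + int i) * z) = cis ((1 - real L) * z) * w ^ i"
      unfolding w_def Complex.DeMoivre cis_mult by (simp add: algebra_simps)
  qed auto
  then have "dirichlet_kernel L z = cis ((1 - real L) * z) * ((w ^ (2 * L) - 1) / (w - 1))"
    by (simp only: sum_distrib_left[symmetric] geometric_sum[OF w1])
  then have "norm (dirichlet_kernel L z) = norm ((w ^ (2 * L) - 1) / (w - 1))"
    by (simp only: norm_mult norm_cis mult_1_left)
  also have "\<dots> \<le> 2 / norm (w - 1)"
    unfolding norm_divide
    by (rule divide_right_mono, rule order_trans[OF norm_triangle_ineq4]) (simp_all add: w_def norm_power)
  also have "\<dots> = 1 / \<bar>sin (z / 2)\<bar>" by (simp add: w_def norm_cis_minus_one)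
  finally show ?thesis .
qed

section \<open>Sums of the Dirichlet kernel over a shifted grid\<close>

lemma half_le_sin:
  assumes "0 \<le> v" and "v \<le> pi / 2"
  shows "v / 2 \<le> sin v"
proof (cases "v \<le> pi / 3")
  case True
  have "(\<lambda>u. sin u - u / 2) 0 \<le> (\<lambda>u. sin u - u / 2) v"
  proof (rule DERIV_nonneg_imp_nondecreasing[OF assms(1)])
    fix u assume u: "0 \<le> u" "u \<le> v"
    have "cos (pi / 3) \<le> cos u"
      using u True by (intro cos_monotone_0_pi_le) auto
    then have "0 \<le> cos u - 1 / 2" by (simp add: cos_60)
    moreover have "DERIV (\<lambda>u. sin u - u / 2) u :> cos u - 1 / 2"
      by (auto intro!: derivative_eq_intros)
    ultimately show "\<exists>y. DERIV (\<lambda>u. sin u - u / 2) u :> y \<and> 0 \<le> y" by blast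
  qed
  then show ?thesis by simp
next
  case False
  have "sin (pi / 3) \<le> sin v"
    using False assms by (intro sin_monotone_2pi_le) auto
  then have "sqrt 3 / 2 \<le> sin v" by (simp add: sin_60)
  moreover have "1.7 \<le> sqrt 3" by (rule real_le_rsqrt) (simp add: power2_eq_square)
  moreover have "pi \<le> 3.2" using pi_approx by simp
  ultimately show ?thesis using assms by linarith
qed

lemma inverse_sin_le_grid:
  fixes n j :: nat
  assumes j: "1 \<le> j" "j + 2 \<le> n"
    and v: "real j * pi / n \<le> v" "v \<le> real (Suc j) * pi / n"
  shows "0 < sin v" and "1 / sin v \<le> real n * (1 / real j + 1 / real (n - 1 - j))"
proof -
  define k where "k = n - 1 - j"
  define a where "a = real j * pi / n"
  define b where "b = real k * pi / n"
  have pos: "real n > 0" "real j > 0" "real k > 0" using j by (auto simp: k_def)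
  then have ab: "0 < a" "0 < b" by (auto simp: a_def b_def)
  have "real k = real n - real (Suc j)" using j by (simp add: k_def of_nat_diff)
  then have "b = (real n - real (Suc j)) * pi / n" by (simp only: b_def)
  also have "\<dots> = pi - real (Suc j) * pi / n" using pos by (simp add: field_simps)
  finally have "b = pi - real (Suc j) * pi / n" .
  then have av: "a \<le> v" and bv: "b \<le> pi - v" using v by (auto simp: a_def)
  have sin_ge: "min a b / 2 \<le> sin v"
  proof (cases "v \<le> pi / 2")
    case True
    then show ?thesis using half_le_sin[of v] av ab by linarith
  next
    case False
    then have "(pi - v) / 2 \<le> sin (pi - v)" using half_le_sin[of "pi - v"] bv ab by linarith
    then show ?thesis using bv by simp
  qed
  moreover have min_pos: "0 < min a b" using ab by simp
  ultimately show "0 < sin v" by linarith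
  have "1 / sin v \<le> 1 / (min a b / 2)"
    using sin_ge min_pos by (intro divide_left_mono) auto
  also have "\<dots> \<le> 2 / a + 2 / b" using ab by (simp add: min_def)
  also have "\<dots> = (2 / pi) * (real n * (1 / real j + 1 / real k))"
    using pos by (simp add: a_def b_def field_simps)
  also have "\<dots> \<le> real n * (1 / real j + 1 / real k)"
    using pi_ge_two pos by (intro mult_left_le_one_le) (auto simp: field_simps)
  finally show "1 / sin v \<le> real n * (1 / real j + 1 / real (n - 1 - j))" by (simp add: k_def)
qed

lemma sum_periodic_grid_shift:
  fixes F :: "real \<Rightarrow> 'a::comm_monoid_add"
  assumes n: "n > 0" and h: "real n * h = 2 * pi"
    and per: "\<And>z k. F (z + 2 * pi * of_int k) = F z"
  obtains t where "0 \<le> t" and "t < h"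
    and "(\<Sum>a<n. F (x - real a * h)) = (\<Sum>j<n. F (t + real j * h))"
proof -
  have "0 < real n * h" using h by simp
  then have h_pos: "h > 0" using n by (simp add: zero_less_mult_iff)
  define q where "q = \<lfloor>x / h\<rfloor>"
  define t where "t = x - of_int q * h"
  have "of_int q \<le> x / h" "x / h < of_int q + 1" unfolding q_def by linarith+
  then have t: "0 \<le> t" "t < h" using h_pos by (auto simp: t_def field_simps)
  define idx where "idx a = nat ((q - int a) mod int n)" for a :: nat
  have idx_lt: "idx a < n" for a using n by (simp add: idx_def nat_less_iff)
  have idx_idx: "idx (idx a) = a" if "a < n" for a
  proof -
    have "(q - (q - int a) mod int n) mod int n = (q - (q - int a)) mod int n"
      by (rule mod_diff_right_eq)
    then show ?thesis using n that by (simp add: idx_def)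
  qed
  have "F (x - real a * h) = F (t + real (idx a) * h)" for a
  proof -
    define s where "s = (q - int a) div int n"
    have "q - int a = int (idx a) + int n * s"
      using n by (simp add: idx_def s_def)
    then have "of_int (q - int a) = real (idx a) + real n * of_int s"
      by (metis of_int_add of_int_mult of_int_of_nat_eq)
    then have "x - real a * h = (t + real (idx a) * h) + 2 * pi * of_int s"
      unfolding t_def h[symmetric] by (simp add: algebra_simps)
    then show ?thesis by (simp only: per)
  qed
  then have "(\<Sum>a<n. F (x - real a * h)) = (\<Sum>a<n. F (t + real (idx a) * h))" by simp
  also have "\<dots> = (\<Sum>j<n. F (t + real j * h))"
    by (rule sum.reindex_bij_witness[where i = idx and j = idx]) (auto simp: idx_lt idx_idx)
  finally show ?thesis using t that by blast
qed

lemma harm_le_one_plus_ln: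
  assumes "n > 0"
  shows "harm n \<le> 1 + ln (real n)"
  using euler_mascheroni_sequence_decreasing[of 1 n] assms by (simp add: harm_def)

lemma sum_inverse_pairs_eq_harm:
  "(\<Sum>j=1..n-2. 1 / real j + 1 / real (n - 1 - j)) = 2 * harm (n - 2)"
proof -
  have harm_eq: "(\<Sum>j=1..n-2. 1 / real j) = harm (n - 2)"
    by (simp add: harm_def inverse_eq_divide)
  have "(\<Sum>j=1..n-2. 1 / real (n - 1 - j)) = (\<Sum>j=1..n-2. 1 / real (n - 2 + 1 - j))"
    by (intro sum.cong refl, rule arg_cong[where f = "\<lambda>k. 1 / real k"]) auto
  also have "\<dots> = (\<Sum>j=1..n-2. 1 / real j)"
    by (rule sum.atLeastAtMost_rev[symmetric])
  finally have rev: "(\<Sum>j=1..n-2. 1 / real (n - 1 - j)) = (\<Sum>j=1..n-2. 1 / real j)" .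
  show ?thesis unfolding sum.distrib rev harm_eq by simp
qed

text \<open>After shifting \<open>x\<close> into \<open>[0, h)\<close>, the two extreme terms are bounded by \<open>n\<close> and
  the term \<open>j\<close> by \<open>n (1/j + 1/(n-1-j))\<close>, which sums to twice a harmonic number.\<close>
lemma periodic_grid_sum_le:
  fixes F :: "real \<Rightarrow> real" and n :: nat
  assumes n: "2 \<le> n" and h: "real n * h = 2 * pi"
    and le_n: "\<And>z. F z \<le> real n"
    and le_sin: "\<And>z. sin (z / 2) \<noteq> 0 \<Longrightarrow> F z \<le> 1 / \<bar>sin (z / 2)\<bar>"
    and per: "\<And>z k. F (z + 2 * pi * of_int k) = F z"
  shows "(\<Sum>a<n. F (x - real a * h)) \<le> real n * (4 + 2 * ln (real n))"
proof -
  obtain t where t: "0 \<le> t" "t < h" and shift: "(\<Sum>a<n. F (x - real a * h)) = (\<Sum>j<n. F (t + real j * h))"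
    using sum_periodic_grid_shift[of n h F x] n h per by auto
  have n_pos: "real n > 0" using n by simp
  have h_eq: "h = 2 * pi / real n" using h n by (simp add: field_simps)
  have mid: "F (t + real j * h) \<le> real n * (1 / real j + 1 / real (n - 1 - j))"
    if "j \<in> {1..n-2}" for j
  proof -
    define v where "v = (t + real j * h) / 2"
    have v: "real j * pi / n \<le> v" "v \<le> real (Suc j) * pi / n"
      using t n_pos by (auto simp: v_def h_eq field_simps)
    have j: "1 \<le> j" "j + 2 \<le> n" using that n by auto
    have "F (t + real j * h) \<le> 1 / sin v"
      using le_sin[of "t + real j * h"] inverse_sin_le_grid(1)[OF j v] by (simp add: v_def)
    also have "\<dots> \<le> real n * (1 / real j + 1 / real (n - 1 - j))"
      by (rule inverse_sin_le_grid(2)[OF j v])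
    finally show ?thesis .
  qed
  have grid_split: "{..<n} = insert 0 (insert (n - 1) {1..n-2})" using n by auto
  have notin: "n - 1 \<notin> {1..n-2}" "0 \<notin> insert (n - 1) {1..n-2}" using n by auto
  have "(\<Sum>j<n. F (t + real j * h)) =
      F (t + real 0 * h) + (F (t + real (n - 1) * h) + (\<Sum>j=1..n-2. F (t + real j * h)))"
    unfolding grid_split by (simp only: sum.insert finite_insert finite_atLeastAtMost notin simp_thms)
  also have "\<dots> \<le> real n + (real n + (\<Sum>j=1..n-2. real n * (1 / real j + 1 / real (n - 1 - j))))"
    using le_n mid by (intro add_mono sum_mono) auto
  also have "\<dots> = real n * (2 + 2 * harm (n - 2))"
    unfolding sum_distrib_left[symmetric] sum_inverse_pairs_eq_harm by (simp add: algebra_simps)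
  also have "\<dots> \<le> real n * (4 + 2 * ln (real n))"
  proof -
    have "harm (n - 2) \<le> (harm n :: real)" by (rule harm_mono) simp
    also have "\<dots> \<le> 1 + ln (real n)" using n by (intro harm_le_one_plus_ln) simp
    finally show ?thesis by (intro mult_left_mono) auto
  qed
  finally show ?thesis by (simp only: shift)
qed

lemma sum_norm_dirichlet_kernel_le:
  assumes "2 * L \<le> n" and "2 \<le> n" and "real n * h = 2 * pi"
  shows "(\<Sum>a<n. norm (dirichlet_kernel L (x - real a * h))) \<le> real n * (4 + 2 * ln (real n))"
proof (rule periodic_grid_sum_le[OF assms(2,3)])
  show "norm (dirichlet_kernel L z) \<le> real n" for z
    using norm_dirichlet_kernel_le[of L z] assms(1) by linarith
  show "norm (dirichlet_kernel L z) \<le> 1 / \<bar>sin (z / 2)\<bar>" if "sin (z / 2) \<noteq> 0" for z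
    using that by (rule norm_dirichlet_kernel_le_inverse_sin)
qed (simp only: dirichlet_kernel_periodic)

section \<open>Exact quadrature for the basis functions\<close>

lemma of_real_cos_eq_cis: "complex_of_real (cos t) = (cis t + cis (- t)) / 2"
  by (simp add: complex_eq_iff)

lemma cos_sampling:
  assumes m: "m > 0" and h: "real (4 * m) * h = 2 * pi" and g: "g \<le> 2 * m"
  shows "(\<Sum>a<4 * m. cos (real g * (real a * h)) * Re (dirichlet_kernel (2 * m) (\<phi> - real a * h)))
    = real (4 * m) * cos (real g * \<phi>)"
proof -
  have n: "4 * m > 0" and L: "2 * (2 * m) \<le> 4 * m" using m by simp_all
  obtain j0 where j0: "j0 \<in> {1 - int (2 * m)..int (2 * m)}" "int (4 * m) dvd - int g - j0"
    and cos_j0: "cos (of_int j0 * \<phi>) = cos (real g * \<phi>)"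
  proof (cases "g = 2 * m")
    case True
    then show ?thesis by (intro that[of "int (2 * m)"]) (use m in auto)
  next
    case False
    then show ?thesis by (intro that[of "- int g"]) (use g in auto)
  qed
  have plus: "(\<Sum>a<4 * m. cis (of_int (int g) * real a * h) * dirichlet_kernel (2 * m) (\<phi> - real a * h))
      = of_nat (4 * m) * cis (of_int (int g) * \<phi>)"
    by (rule dirichlet_kernel_reproduces[OF n h L]) (use g m in auto)
  have minus: "(\<Sum>a<4 * m. cis (of_int (- int g) * real a * h) * dirichlet_kernel (2 * m) (\<phi> - real a * h))
      = of_nat (4 * m) * cis (of_int j0 * \<phi>)"
    by (rule dirichlet_kernel_reproduces[OF n h L j0])
  have "(\<Sum>a<4 * m. complex_of_real (cos (real g * (real a * h))) * dirichlet_kernel (2 * m) (\<phi> - real a * h))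
      = ((\<Sum>a<4 * m. cis (of_int (int g) * real a * h) * dirichlet_kernel (2 * m) (\<phi> - real a * h))
        + (\<Sum>a<4 * m. cis (of_int (- int g) * real a * h) * dirichlet_kernel (2 * m) (\<phi> - real a * h))) / 2"
    unfolding sum.distrib[symmetric] sum_divide_distrib
    by (intro sum.cong refl) (simp add: of_real_cos_eq_cis algebra_simps add_divide_distrib)
  also have "\<dots> = of_nat (4 * m) * (cis (real g * \<phi>) + cis (of_int j0 * \<phi>)) / 2"
    unfolding plus minus by (simp add: algebra_simps)
  finally have "Re (\<Sum>a<4 * m. complex_of_real (cos (real g * (real a * h))) * dirichlet_kernel (2 * m) (\<phi> - real a * h))
      = real (4 * m) * cos (real g * \<phi>)"
    using cos_j0 by simp
  then show ?thesis by simp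
qed

lemma alternating_cis_sampling:
  assumes m: "m > 0" and h: "real (4 * m) * h = 2 * pi" and g: "- int m < g" "g \<le> int m"
  shows "(\<Sum>b<4 * m. (-1) ^ b * cis (of_int g * real b * h) * dirichlet_kernel m (\<theta> - real b * h)) = 0"
proof -
  have "2 * real m * h = pi" using h by (simp add: mult_ac)
  then have "of_int (g + 2 * int m) * real b * h = of_int g * real b * h + real b * pi" for b
    by (simp add: algebra_simps flip: \<open>2 * real m * h = pi\<close>)
  moreover have "cis (real b * pi) = (-1) ^ b" for b
    by (simp only: Complex.DeMoivre[symmetric] cis_pi)
  ultimately have "(-1) ^ b * cis (of_int g * real b * h) = cis (of_int (g + 2 * int m) * real b * h)" for b
    by (simp only: cis_mult[symmetric] mult.commute)
  then show ?thesis
    by (simp only:) (rule dirichlet_kernel_annihilates, use m h g in auto)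
qed

lemma sum_even_index_pairs:
  fixes u v :: "nat \<Rightarrow> 'a::field_char_0"
  shows "(\<Sum>a<A. \<Sum>b<B. of_bool (even (a + b)) * (u a * v b))
    = ((\<Sum>a<A. u a) * (\<Sum>b<B. v b) + (\<Sum>a<A. (-1) ^ a * u a) * (\<Sum>b<B. (-1) ^ b * v b)) / 2"
proof -
  have "of_bool (even (a + b)) * (u a * v b) = (u a * v b + ((-1) ^ a * u a) * ((-1) ^ b * v b)) / 2"
    for a b
    by (cases "even a"; cases "even b") auto
  then show ?thesis
    by (simp only: sum_product sum_divide_distrib sum.distrib add_divide_distrib)
qed

definition quadrature_weight :: "nat \<Rightarrow> nat \<Rightarrow> real \<Rightarrow> real \<Rightarrow> nat \<Rightarrow> nat \<Rightarrow> complex" where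
  "quadrature_weight m1 m2 \<phi> \<theta> a b = of_bool (even (a + b)) / of_nat (8 * m1 * m2)
     * complex_of_real (Re (dirichlet_kernel (2 * m1) (\<phi> - real a * grid_step m1)))
     * dirichlet_kernel m2 (\<theta> - real b * grid_step m2)"

text \<open>The restriction to \<open>a + b\<close> even costs nothing: the alternating part of its
  indicator vanishes in the \<open>\<theta>\<close>-direction.\<close>
lemma cos_cis_quadrature:
  assumes m1: "m1 > 0" and m2: "m2 > 0"
    and g: "fst g \<le> 2 * m1" "- int m2 < snd g" "snd g \<le> int m2"
  shows "cos_cis g \<phi> \<theta> = (\<Sum>a<4 * m1. \<Sum>b<4 * m2.
     quadrature_weight m1 m2 \<phi> \<theta> a b * cos_cis g (real a * grid_step m1) (real b * grid_step m2))"
proof -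
  define h1 where "h1 = grid_step m1"
  define h2 where "h2 = grid_step m2"
  have h1: "real (4 * m1) * h1 = 2 * pi" and h2: "real (4 * m2) * h2 = 2 * pi"
    using m1 m2 by (simp_all add: h1_def h2_def grid_step_def)
  define \<alpha> where "\<alpha> a = complex_of_real (cos (real (fst g) * (real a * h1))
      * Re (dirichlet_kernel (2 * m1) (\<phi> - real a * h1)))" for a :: nat
  define \<beta> where "\<beta> b = cis (of_int (snd g) * real b * h2) * dirichlet_kernel m2 (\<theta> - real b * h2)"
    for b :: nat
  have sum_\<alpha>: "(\<Sum>a<4 * m1. \<alpha> a) = complex_of_real (real (4 * m1) * cos (real (fst g) * \<phi>))"
    unfolding \<alpha>_def of_real_sum[symmetric] cos_sampling[OF m1 h1 g(1)] ..
  have sum_\<beta>: "(\<Sum>b<4 * m2. \<beta> b) = of_nat (4 * m2) * cis (of_int (snd g) * \<theta>)"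
    unfolding \<beta>_def by (rule dirichlet_kernel_reproduces[OF _ h2]) (use m2 g in auto)
  have sum_alt_\<beta>: "(\<Sum>b<4 * m2. (-1) ^ b * \<beta> b) = 0"
    unfolding \<beta>_def mult.assoc[symmetric] by (rule alternating_cis_sampling[OF m2 h2 g(2,3)])
  have "quadrature_weight m1 m2 \<phi> \<theta> a b * cos_cis g (real a * h1) (real b * h2)
      = of_bool (even (a + b)) * (\<alpha> a * \<beta> b) / of_nat (8 * m1 * m2)" for a b
    unfolding quadrature_weight_def cos_cis_def \<alpha>_def \<beta>_def h1_def h2_def of_real_mult
    by (simp add: mult_ac)
  then have "(\<Sum>a<4 * m1. \<Sum>b<4 * m2.
      quadrature_weight m1 m2 \<phi> \<theta> a b * cos_cis g (real a * h1) (real b * h2))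
    = (\<Sum>a<4 * m1. \<Sum>b<4 * m2. of_bool (even (a + b)) * (\<alpha> a * \<beta> b)) / of_nat (8 * m1 * m2)"
    by (simp only: sum_divide_distrib)
  also have "\<dots> = cos_cis g \<phi> \<theta>"
    unfolding sum_even_index_pairs sum_\<alpha> sum_\<beta> sum_alt_\<beta>
    using m1 m2 by (simp add: cos_cis_def field_simps)
  finally show ?thesis by (simp add: h1_def h2_def)
qed

lemma cos_cis_poly_quadrature:
  assumes m1: "m1 > 0" and m2: "m2 > 0"
  shows "cos_cis_poly c m1 m2 \<phi> \<theta> = (\<Sum>a<4 * m1. \<Sum>b<4 * m2. quadrature_weight m1 m2 \<phi> \<theta> a b
      * cos_cis_poly c m1 m2 (real a * grid_step m1) (real b * grid_step m2))"
proof -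
  let ?W = "quadrature_weight m1 m2 \<phi> \<theta>"
  let ?B = "\<lambda>g a b. cos_cis g (real a * grid_step m1) (real b * grid_step m2)"
  have "cos_cis_poly c m1 m2 \<phi> \<theta> = (\<Sum>g\<in>Gamma_sq m1 m2. c g * (\<Sum>a<4 * m1. \<Sum>b<4 * m2. ?W a b * ?B g a b))"
    unfolding cos_cis_poly_def
    by (intro sum.cong refl arg_cong[where f = "(*) _"] cos_cis_quadrature[OF m1 m2])
      (auto simp: Gamma_sq_def)
  also have "\<dots> = (\<Sum>g\<in>Gamma_sq m1 m2. \<Sum>a<4 * m1. \<Sum>b<4 * m2. ?W a b * (c g * ?B g a b))"
    by (simp add: sum_distrib_left mult_ac)
  also have "\<dots> = (\<Sum>a<4 * m1. \<Sum>b<4 * m2. \<Sum>g\<in>Gamma_sq m1 m2. ?W a b * (c g * ?B g a b))"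
    by (subst sum.swap, rule sum.cong[OF refl], rule sum.swap)
  also have "\<dots> = (\<Sum>a<4 * m1. \<Sum>b<4 * m2. ?W a b
      * cos_cis_poly c m1 m2 (real a * grid_step m1) (real b * grid_step m2))"
    by (simp add: cos_cis_poly_def sum_distrib_left)
  finally show ?thesis .
qed

section \<open>The Lebesgue constant\<close>

lemma sum_norm_quadrature_weight_le:
  assumes m1: "m1 > 0" and m2: "m2 > 0"
  shows "(\<Sum>a<4 * m1. \<Sum>b<4 * m2. norm (quadrature_weight m1 m2 \<phi> \<theta> a b))
    \<le> 2 * (4 + 2 * ln (real (4 * m1))) * (4 + 2 * ln (real (4 * m2)))"
proof -
  define D1 where "D1 a = norm (dirichlet_kernel (2 * m1) (\<phi> - real a * grid_step m1))" for a
  define D2 where "D2 b = norm (dirichlet_kernel m2 (\<theta> - real b * grid_step m2))" for b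
  have sum_D1: "(\<Sum>a<4 * m1. D1 a) \<le> real (4 * m1) * (4 + 2 * ln (real (4 * m1)))"
    unfolding D1_def using m1 by (intro sum_norm_dirichlet_kernel_le) (simp_all add: grid_step_def)
  have sum_D2: "(\<Sum>b<4 * m2. D2 b) \<le> real (4 * m2) * (4 + 2 * ln (real (4 * m2)))"
    unfolding D2_def using m2 by (intro sum_norm_dirichlet_kernel_le) (simp_all add: grid_step_def)
  have "norm (quadrature_weight m1 m2 \<phi> \<theta> a b) \<le> 1 / (8 * real m1 * real m2) * (D1 a * D2 b)" for a b
  proof -
    have "norm (quadrature_weight m1 m2 \<phi> \<theta> a b) \<le> 1 / (8 * real m1 * real m2)
        * (\<bar>Re (dirichlet_kernel (2 * m1) (\<phi> - real a * grid_step m1))\<bar> * D2 b)"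
      by (simp add: quadrature_weight_def D2_def norm_mult norm_divide)
    also have "\<dots> \<le> 1 / (8 * real m1 * real m2) * (D1 a * D2 b)"
      unfolding D1_def D2_def by (intro mult_left_mono mult_right_mono abs_Re_le_cmod) auto
    finally show ?thesis .
  qed
  then have "(\<Sum>a<4 * m1. \<Sum>b<4 * m2. norm (quadrature_weight m1 m2 \<phi> \<theta> a b))
      \<le> (\<Sum>a<4 * m1. \<Sum>b<4 * m2. 1 / (8 * real m1 * real m2) * (D1 a * D2 b))"
    by (intro sum_mono)
  also have "\<dots> = 1 / (8 * real m1 * real m2) * ((\<Sum>a<4 * m1. D1 a) * (\<Sum>b<4 * m2. D2 b))"
    unfolding sum_product by (simp only: sum_distrib_left)
  also have "\<dots> \<le> 1 / (8 * real m1 * real m2)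
      * ((real (4 * m1) * (4 + 2 * ln (real (4 * m1)))) * (real (4 * m2) * (4 + 2 * ln (real (4 * m2)))))"
    using sum_D1 sum_D2 m1 by (intro mult_left_mono mult_mono sum_nonneg) (auto simp: D2_def)
  also have "\<dots> = 2 * (4 + 2 * ln (real (4 * m1))) * (4 + 2 * ln (real (4 * m2)))"
    using m1 m2 by (simp add: field_simps)
  finally show ?thesis .
qed

lemma norm_cos_cis_poly_le:
  assumes m1: "m1 > 0" and m2: "m2 > 0"
    and grid: "\<And>a b. even (a + b) \<Longrightarrow>
      norm (cos_cis_poly c m1 m2 (real a * grid_step m1) (real b * grid_step m2)) \<le> B"
  shows "norm (cos_cis_poly c m1 m2 \<phi> \<theta>)
    \<le> B * (2 * (4 + 2 * ln (real (4 * m1))) * (4 + 2 * ln (real (4 * m2))))"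
proof -
  have term_le: "norm (quadrature_weight m1 m2 \<phi> \<theta> a b
      * cos_cis_poly c m1 m2 (real a * grid_step m1) (real b * grid_step m2))
    \<le> B * norm (quadrature_weight m1 m2 \<phi> \<theta> a b)" for a b
  proof (cases "even (a + b)")
    case True
    have "norm (quadrature_weight m1 m2 \<phi> \<theta> a b
        * cos_cis_poly c m1 m2 (real a * grid_step m1) (real b * grid_step m2))
      \<le> norm (quadrature_weight m1 m2 \<phi> \<theta> a b) * B"
      unfolding norm_mult using grid[OF True] by (rule mult_left_mono) simp
    then show ?thesis by (simp only: mult.commute)
  qed (simp add: quadrature_weight_def)
  have "norm (cos_cis_poly c m1 m2 \<phi> \<theta>) \<le> (\<Sum>a<4 * m1. \<Sum>b<4 * m2. norm (quadrature_weight m1 m2 \<phi> \<theta> a b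
      * cos_cis_poly c m1 m2 (real a * grid_step m1) (real b * grid_step m2)))"
    unfolding cos_cis_poly_quadrature[OF m1 m2, of c \<phi> \<theta>]
    by (rule order_trans[OF norm_sum sum_mono]) (rule norm_sum)
  also have "\<dots> \<le> B * (\<Sum>a<4 * m1. \<Sum>b<4 * m2. norm (quadrature_weight m1 m2 \<phi> \<theta> a b))"
    unfolding sum_distrib_left by (intro sum_mono term_le)
  also have "\<dots> \<le> B * (2 * (4 + 2 * ln (real (4 * m1))) * (4 + 2 * ln (real (4 * m2))))"
  proof (rule mult_left_mono[OF sum_norm_quadrature_weight_le[OF m1 m2]])
    have "even (0 + 0 :: nat)" by simp
    from order_trans[OF norm_ge_zero grid[OF this]] show "0 \<le> B" .
  qed
  finally show ?thesis .
qed

lemma four_plus_two_ln_le: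
  assumes "1 \<le> m"
  shows "4 + 2 * ln (real (4 * m)) \<le> 12 * ln (real m + 1)"
proof -
  have "ln (4 :: real) = 2 * ln 2" using ln_realpow[of 2 2] by simp
  then have "ln (real (4 * m)) = 2 * ln 2 + ln (real m)" using assms by (simp add: ln_mult)
  moreover have "ln 2 \<le> ln (real m + 1)" and "ln (real m) \<le> ln (real m + 1)"
    using assms by simp_all
  ultimately show ?thesis using ln2_ge_two_thirds by linarith
qed

lemma interpolant_sup_norm_le:
  assumes m1: "1 \<le> m1" and m2: "1 \<le> m2" and f: "sup_norm_le f 1" and p: "p \<in> Pi_sq m1 m2"
    and interp: "\<forall>(i1, i2) \<in> node_idx m1 m2.
      p (node_r m1 i1) (node_theta m2 i2) = f (node_r m1 i1) (node_theta m2 i2)"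
  shows "sup_norm_le p (288 * ln (real m1 + 1) * ln (real m2 + 1))"
proof -
  have m: "m1 > 0" "m2 > 0" using m1 m2 by simp_all
  obtain c where pc: "\<And>r \<theta>. p r \<theta> = cos_cis_poly c m1 m2 (arccos r) \<theta>"
    using Pi_sq_cos_cis_poly[OF p] by blast
  have "norm (p r \<theta>) \<le> 1 * (2 * (4 + 2 * ln (real (4 * m1))) * (4 + 2 * ln (real (4 * m2))))" for r \<theta>
    unfolding pc using interpolant_grid_value_le[OF m f pc interp] by (intro norm_cos_cis_poly_le[OF m])
  also have "\<dots> \<le> 2 * (12 * ln (real m1 + 1)) * (12 * ln (real m2 + 1))"
  proof (unfold mult_1_left, rule mult_mono)
    show "2 * (4 + 2 * ln (real (4 * m1))) \<le> 2 * (12 * ln (real m1 + 1))"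
      using four_plus_two_ln_le[OF m1] by simp
    show "4 + 2 * ln (real (4 * m2)) \<le> 12 * ln (real m2 + 1)"
      by (rule four_plus_two_ln_le[OF m2])
  qed (use m1 m2 in simp_all)
  finally show ?thesis by (auto simp: sup_norm_le_def mult.assoc)
qed

theorem theorem8p2:
  shows "\<exists>C > 0. \<forall>m1 m2 :: nat. m1 \<ge> 1 \<longrightarrow> m2 \<ge> 1 \<longrightarrow>
     (\<forall>f \<in> C_disk. sup_norm_le f 1 \<longrightarrow>
       (\<forall>p \<in> Pi_sq m1 m2.
          (\<forall>(i1, i2) \<in> node_idx m1 m2.
             p (node_r m1 i1) (node_theta m2 i2) = f (node_r m1 i1) (node_theta m2 i2)) \<longrightarrow>
          sup_norm_le p (C * ln (real m1 + 1) * ln (real m2 + 1))))"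
  by (rule exI[of _ 288]) (auto intro: interpolant_sup_norm_le)

end
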